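(* Let $M$ be an exact $\mathfrak{K}$-module. (a) If the $\mathfrak{S}$-module $(M_0,t_0)$ is cohomologically trivial, then $\operatorname{im}N(t_0)=\operatorname{im}\alpha_{01}=\ker\alpha_{20}=\ker(1-t_0)$ and $\operatorname{im}(1-t_0)=\operatorname{im}\alpha_{02}=\ker\alpha_{10}=\ker N(t_0)$. (b) If the $\mathfrak{S}$-module $(M_1,s_1)$ is cohomologically trivial, then $\operatorname{im}(1-s_1)=\operatorname{im}\alpha_{12}=\ker\alpha_{01}=\ker N(s_1)$ and $\operatorname{im}N(s_1)=\operatorname{im}\alpha_{10}=\ker\alpha_{21}=\ker(1-s_1)$. (c) If $\operatorname{im}(1-t_2)=\ker(1-s_2)$ and $\operatorname{im}(1-s_2)=\ker(1-t_2)$, then $\operatorname{im}(1-t_2)=\operatorname{im}\alpha_{20}=\ker\alpha_{12}=\ker(1-s_2)$ and $\operatorname{im}(1-s_2)=\operatorname{im}\alpha_{21}=\ker\alpha_{02}=\ker(1-t_2)$.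
   Context: Fix a prime $p$, $N(x)=1+x+\dots+x^{p-1}$, $\mathfrak{S}=\mathbb{Z}[t]/(t^p-1)$. A $\mathfrak{K}$-module $M$ amounts to $\mathbb{Z}/2$-graded abelian groups $M_0,M_1,M_2$ with homomorphisms $\alpha_{jk}\colon M_k\to M_j$ ($j\neq k$; $\alpha_{12},\alpha_{21}$ grading-reversing, others grading-preserving) with $\alpha_{jk}\alpha_{km}=0$ for $\{j,k,m\}=\{0,1,2\}$ and, for $t_0:=1-\alpha_{02}\alpha_{20}$ on $M_0$, $s_1:=1-\alpha_{12}\alpha_{21}$ on $M_1$, $t_2:=1-\alpha_{20}\alpha_{02}$, $s_2:=1-\alpha_{21}\alpha_{12}$ on $M_2$: $\alpha_{01}\alpha_{10}=N(t_0)$, $\alpha_{10}\alpha_{01}=N(s_1)$, $N(t_2)+N(s_2)=p$. $M$ is exact if the cyclic sequences $M_0\xrightarrow{\alpha_{10}}M_1\xrightarrow{\alpha_{21}}M_2\xrightarrow{\alpha_{02}}M_0$ and $M_0\xrightarrow{\alpha_{20}}M_2\xrightarrow{\alpha_{12}}M_1\xrightarrow{\alpha_{01}}M_0$ are exact. An $\mathfrak{S}$-module $(L,t)$ ($t^p=1$) is cohomologically trivial if $\ker(1-t)=\operatorname{im}N(t)$ and $\operatorname{im}(1-t)=\ker N(t)$. *)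

theory Defs
  imports "HOL-Computational_Algebra.Primes"
begin

text \<open>A Z/2-grading of an abelian group is encoded by the additive idempotent projection onto
the even part (the odd part is the image of x - e x).\<close>

definition hom :: "('a::ab_group_add \<Rightarrow> 'b::ab_group_add) \<Rightarrow> bool" where
  "hom f \<longleftrightarrow> (\<forall>x y. f (x + y) = f x + f y)"

definition grading :: "('a::ab_group_add \<Rightarrow> 'a) \<Rightarrow> bool" where
  "grading e \<longleftrightarrow> hom e \<and> (\<forall>x. e (e x) = e x)"

definition grade_pres :: "('a::ab_group_add \<Rightarrow> 'a) \<Rightarrow> ('b::ab_group_add \<Rightarrow> 'b) \<Rightarrow> ('a \<Rightarrow> 'b) \<Rightarrow> bool" where
  "grade_pres e e' f \<longleftrightarrow> (\<forall>x. f (e x) = e' (f x))"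

definition grade_rev :: "('a::ab_group_add \<Rightarrow> 'a) \<Rightarrow> ('b::ab_group_add \<Rightarrow> 'b) \<Rightarrow> ('a \<Rightarrow> 'b) \<Rightarrow> bool" where
  "grade_rev e e' f \<longleftrightarrow> (\<forall>x. f (e x) = f x - e' (f x))"

definition Nop :: "nat \<Rightarrow> ('a::ab_group_add \<Rightarrow> 'a) \<Rightarrow> 'a \<Rightarrow> 'a" where
  "Nop p t x = (\<Sum>i<p. (t ^^ i) x)"

definition kerf :: "('a \<Rightarrow> 'b::zero) \<Rightarrow> 'a set" where
  "kerf f = {x. f x = 0}"

definition K_module ::
  "nat \<Rightarrow> ('a::ab_group_add \<Rightarrow> 'a) \<Rightarrow> ('b::ab_group_add \<Rightarrow> 'b) \<Rightarrow> ('c::ab_group_add \<Rightarrow> 'c)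
   \<Rightarrow> ('b \<Rightarrow> 'a) \<Rightarrow> ('a \<Rightarrow> 'b) \<Rightarrow> ('c \<Rightarrow> 'a) \<Rightarrow> ('a \<Rightarrow> 'c) \<Rightarrow> ('c \<Rightarrow> 'b) \<Rightarrow> ('b \<Rightarrow> 'c) \<Rightarrow> bool" where
  "K_module p e0 e1 e2 a01 a10 a02 a20 a12 a21 \<longleftrightarrow>
     grading e0 \<and> grading e1 \<and> grading e2 \<and>
     hom a01 \<and> hom a10 \<and> hom a02 \<and> hom a20 \<and> hom a12 \<and> hom a21 \<and>
     grade_pres e1 e0 a01 \<and> grade_pres e0 e1 a10 \<and>
     grade_pres e2 e0 a02 \<and> grade_pres e0 e2 a20 \<and>
     grade_rev e2 e1 a12 \<and> grade_rev e1 e2 a21 \<and>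
     (\<forall>x. a01 (a12 x) = 0) \<and> (\<forall>x. a02 (a21 x) = 0) \<and>
     (\<forall>x. a10 (a02 x) = 0) \<and> (\<forall>x. a12 (a20 x) = 0) \<and>
     (\<forall>x. a20 (a01 x) = 0) \<and> (\<forall>x. a21 (a10 x) = 0) \<and>
     (let t0 = (\<lambda>x. x - a02 (a20 x)); s1 = (\<lambda>x. x - a12 (a21 x));
          t2 = (\<lambda>x. x - a20 (a02 x)); s2 = (\<lambda>x. x - a21 (a12 x)) in
       (\<forall>x. a01 (a10 x) = Nop p t0 x) \<and>
       (\<forall>x. a10 (a01 x) = Nop p s1 x) \<and>
       (\<forall>x. Nop p t2 x + Nop p s2 x = (\<Sum>i<p. x)))"

definition K_exact ::
  "('b::ab_group_add \<Rightarrow> 'a::ab_group_add) \<Rightarrow> ('a \<Rightarrow> 'b) \<Rightarrow> ('c::ab_group_add \<Rightarrow> 'a) \<Rightarrow> ('a \<Rightarrow> 'c) \<Rightarrow> ('c \<Rightarrow> 'b) \<Rightarrow> ('b \<Rightarrow> 'c) \<Rightarrow> bool" where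
  "K_exact a01 a10 a02 a20 a12 a21 \<longleftrightarrow>
     range a10 = kerf a21 \<and> range a21 = kerf a02 \<and> range a02 = kerf a10 \<and>
     range a20 = kerf a12 \<and> range a12 = kerf a01 \<and> range a01 = kerf a20"

definition coh_trivial :: "nat \<Rightarrow> ('a::ab_group_add \<Rightarrow> 'a) \<Rightarrow> bool" where
  "coh_trivial p t \<longleftrightarrow> hom t \<and> (\<forall>x. (t ^^ p) x = x) \<and>
     kerf (\<lambda>x. x - t x) = range (Nop p t) \<and> range (\<lambda>x. x - t x) = kerf (Nop p t)"

end

theory Submission
  imports Defs
begin

text \<open>Each of the six chains is a cycle of inclusions
  \<open>im (f k) \<subseteq> im f = ker g \<subseteq> ker (h g) = im (f k)\<close>,
  where \<open>im f = ker g\<close> is exactness and the last equality is the cohomological hypothesis,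
  once \<open>1 - t\<^sub>0, N(t\<^sub>0), 1 - s\<^sub>1, N(s\<^sub>1), 1 - t\<^sub>2, 1 - s\<^sub>2\<close> are written as composites of the
  structure maps.\<close>

lemma hom_zero: "hom f \<Longrightarrow> f 0 = 0"
  unfolding hom_def by (metis add_cancel_right_right)

lemma range_comp_eq_range_eq_kerf_eq_kerf_comp:
  assumes exact: "range f = kerf g"
    and "h 0 = 0"
    and cycle: "kerf (\<lambda>x. h (g x)) = range (\<lambda>x. f (k x))"
  shows "range (\<lambda>x. f (k x)) = range f \<and> range f = kerf g \<and> kerf g = kerf (\<lambda>x. h (g x))"
proof -
  have range_sub: "range (\<lambda>x. f (k x)) \<subseteq> range f" by blast
  have kerf_sub: "kerf g \<subseteq> kerf (\<lambda>x. h (g x))"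
    using \<open>h 0 = 0\<close> unfolding kerf_def by auto
  have "range f \<subseteq> range (\<lambda>x. f (k x))"
    using kerf_sub unfolding exact cycle .
  with range_sub have "range (\<lambda>x. f (k x)) = range f" by (rule subset_antisym)
  moreover have "kerf (\<lambda>x. h (g x)) \<subseteq> kerf g"
    using range_sub unfolding exact [symmetric] cycle [symmetric] .
  with kerf_sub have "kerf g = kerf (\<lambda>x. h (g x))" by (rule subset_antisym)
  ultimately show ?thesis using exact by simp
qed

lemma K_module_hom_zero:
  assumes "K_module p e0 e1 e2 a01 a10 a02 a20 a12 a21"
  shows "a01 0 = 0" "a10 0 = 0" "a02 0 = 0" "a20 0 = 0" "a12 0 = 0" "a21 0 = 0"
  using assms unfolding K_module_def by (auto intro: hom_zero)

lemma K_module_Nop: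
  assumes "K_module p e0 e1 e2 a01 a10 a02 a20 a12 a21"
  shows "Nop p (\<lambda>x. x - a02 (a20 x)) = (\<lambda>x. a01 (a10 x))"
    and "Nop p (\<lambda>x. x - a12 (a21 x)) = (\<lambda>x. a10 (a01 x))"
  using assms unfolding K_module_def Let_def by auto

theorem proposition7p3:
  fixes p :: nat
    and e0 :: "'a::ab_group_add \<Rightarrow> 'a" and e1 :: "'b::ab_group_add \<Rightarrow> 'b"
    and e2 :: "'c::ab_group_add \<Rightarrow> 'c"
    and a01 :: "'b \<Rightarrow> 'a" and a10 :: "'a \<Rightarrow> 'b" and a02 :: "'c \<Rightarrow> 'a"
    and a20 :: "'a \<Rightarrow> 'c" and a12 :: "'c \<Rightarrow> 'b" and a21 :: "'b \<Rightarrow> 'c"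
  defines "t0 \<equiv> (\<lambda>x. x - a02 (a20 x))" and "s1 \<equiv> (\<lambda>x. x - a12 (a21 x))"
    and "t2 \<equiv> (\<lambda>x. x - a20 (a02 x))" and "s2 \<equiv> (\<lambda>x. x - a21 (a12 x))"
  assumes "prime p"
    and "K_module p e0 e1 e2 a01 a10 a02 a20 a12 a21"
    and "K_exact a01 a10 a02 a20 a12 a21"
  shows
    "(coh_trivial p t0 \<longrightarrow>
       range (Nop p t0) = range a01 \<and> range a01 = kerf a20 \<and> kerf a20 = kerf (\<lambda>x. x - t0 x) \<and>
       range (\<lambda>x. x - t0 x) = range a02 \<and> range a02 = kerf a10 \<and> kerf a10 = kerf (Nop p t0)) \<and>
    (coh_trivial p s1 \<longrightarrow>
       range (\<lambda>x. x - s1 x) = range a12 \<and> range a12 = kerf a01 \<and> kerf a01 = kerf (Nop p s1) \<and>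
       range (Nop p s1) = range a10 \<and> range a10 = kerf a21 \<and> kerf a21 = kerf (\<lambda>x. x - s1 x)) \<and>
    (range (\<lambda>x. x - t2 x) = kerf (\<lambda>x. x - s2 x) \<and> range (\<lambda>x. x - s2 x) = kerf (\<lambda>x. x - t2 x) \<longrightarrow>
       range (\<lambda>x. x - t2 x) = range a20 \<and> range a20 = kerf a12 \<and> kerf a12 = kerf (\<lambda>x. x - s2 x) \<and>
       range (\<lambda>x. x - s2 x) = range a21 \<and> range a21 = kerf a02 \<and> kerf a02 = kerf (\<lambda>x. x - t2 x))"
proof -
  note zero = K_module_hom_zero[OF assms(6)]
  have exact: "range a10 = kerf a21" "range a21 = kerf a02" "range a02 = kerf a10"
    "range a20 = kerf a12" "range a12 = kerf a01" "range a01 = kerf a20"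
    using assms(7) unfolding K_exact_def by simp_all
  have one_minus_eq: "(\<lambda>x. x - t0 x) = (\<lambda>x. a02 (a20 x))" "(\<lambda>x. x - s1 x) = (\<lambda>x. a12 (a21 x))"
    "(\<lambda>x. x - t2 x) = (\<lambda>x. a20 (a02 x))" "(\<lambda>x. x - s2 x) = (\<lambda>x. a21 (a12 x))"
    unfolding t0_def s1_def t2_def s2_def by simp_all
  show ?thesis
    unfolding K_module_Nop[OF assms(6), folded t0_def s1_def] one_minus_eq coh_trivial_def
    using range_comp_eq_range_eq_kerf_eq_kerf_comp[of a01 a20 a02 a10, OF exact(6) zero(3)]
      range_comp_eq_range_eq_kerf_eq_kerf_comp[of a02 a10 a01 a20, OF exact(3) zero(1)]
      range_comp_eq_range_eq_kerf_eq_kerf_comp[of a12 a01 a10 a21, OF exact(5) zero(2)]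
      range_comp_eq_range_eq_kerf_eq_kerf_comp[of a10 a21 a12 a01, OF exact(1) zero(5)]
      range_comp_eq_range_eq_kerf_eq_kerf_comp[of a20 a12 a21 a02, OF exact(4) zero(6)]
      range_comp_eq_range_eq_kerf_eq_kerf_comp[of a21 a02 a20 a12, OF exact(2) zero(4)]
    by (metis (no_types))
qed

end
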